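(* Let $M$ be a holomorphic hypersurface of a Kähler manifold with Norden metric $(M',g,J)$ of dimension $2n+2$, and let $p\in M$. If at $p$ one has $\sigma(x,y)=g(x,y)H-\tilde g(x,y)JH$ for all $x,y\in T_pM$, then $M$ is h-umbilical at $p$ with respect to every vector $\eta$ normal to $M$ at $p$, i.e. $$A_\eta=\frac{\operatorname{trace}A_\eta}{2n}\,I-\frac{\operatorname{trace}(A_\eta\circ J)}{2n}\,J.$$
   Context: A Kähler manifold with Norden metric: manifold $M'$ with almost complex structure $J$, pseudo-Riemannian metric $g$ with $g(JX,JY)=-g(X,Y)$ and $\nabla'J=0$; $\tilde g(X,Y)=g(JX,Y)$. A holomorphic hypersurface is a $2n$-dimensional submanifold $M$ with $J(T_pM)=T_pM$ and $g|_{T_pM}$ nondegenerate, with induced Levi-Civita connection $\nabla$; its second fundamental form $\sigma$ is defined by $\nabla'_XY=\nabla_XY+\sigma(X,Y)$ and its mean curvature vector is $H=\frac1{2n}\operatorname{trace}_g\sigma$. For a vector $\eta$ normal to $M$ at $p$, $A_\eta$ is the endomorphism of $T_pM$ with $g(A_\eta x,y)=g(\sigma(x,y),\eta)$; $I$ is the identity. *)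

theory Defs
  imports "HOL-Analysis.Analysis"
begin

text \<open>Pointwise (tangent-space) setting. The ambient tangent space T_p M' is the
  real vector space of type 'a, the tangent space T_p M is the subspace W.\<close>

definition sub_basis :: "'a::euclidean_space set \<Rightarrow> 'a set" where
  "sub_basis W = (SOME B. B \<subseteq> W \<and> independent B \<and> span B = W)"

definition sub_trace :: "'a::euclidean_space set \<Rightarrow> ('a \<Rightarrow> 'a) \<Rightarrow> real" where
  "sub_trace W f = (let B = sub_basis W in \<Sum>b\<in>B. representation B (f b) b)"

definition g_trace :: "('a::euclidean_space \<Rightarrow> 'a \<Rightarrow> real) \<Rightarrow> 'a set \<Rightarrow> ('a \<Rightarrow> 'a \<Rightarrow> 'b::real_vector) \<Rightarrow> 'b" where
  "g_trace g W s = (let B = sub_basis W;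
      ginv = (SOME h. \<forall>b\<in>B. \<forall>d\<in>B. (\<Sum>c\<in>B. h b c * g c d) = (if b = d then 1 else 0))
    in \<Sum>b\<in>B. \<Sum>c\<in>B. ginv b c *\<^sub>R s b c)"

definition normal_space :: "('a \<Rightarrow> 'a \<Rightarrow> real) \<Rightarrow> 'a set \<Rightarrow> 'a set" where
  "normal_space g W = {v. \<forall>w\<in>W. g v w = 0}"

end

theory Submission
  imports Defs
begin

text \<open>Write h = H, so that \<sigma>(x,y) = g(x,y) h - g(Jx,y) Jh. Taking the g-trace of this identity
  gives 2n h = 2n h - tr(J) Jh, hence tr(J) Jh = 0 and, applying J, tr(J) h = 0. The shape
  operator is A = a I - c J with a = g(h,\<eta>) and c = g(Jh,\<eta>), so
  tr A = 2n a - tr(J) c = 2n a and tr (A J) = tr(J) a + 2n c = 2n c.\<close>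

lemma sub_basis:
  assumes "subspace W"
  shows "sub_basis W \<subseteq> W" "independent (sub_basis W)" "span (sub_basis W) = W"
proof -
  obtain B where "B \<subseteq> W" "independent B" "W \<subseteq> span B"
    by (rule basis_exists)
  then have "\<exists>B. B \<subseteq> W \<and> independent B \<and> span B = W"
    using span_subspace assms by blast
  then have "sub_basis W \<subseteq> W \<and> independent (sub_basis W) \<and> span (sub_basis W) = W"
    unfolding sub_basis_def by (rule someI_ex)
  then show "sub_basis W \<subseteq> W" "independent (sub_basis W)" "span (sub_basis W) = W"
    by auto
qed

lemma finite_sub_basis: "subspace W \<Longrightarrow> finite (sub_basis W)"
  using independent_bound sub_basis(2) by blast

lemma card_sub_basis: "subspace W \<Longrightarrow> card (sub_basis W) = dim W"
  by (metis dim_span_eq_card_independent sub_basis(2,3))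

lemma sub_basis_expansion:
  assumes "subspace W" and "v \<in> W"
  shows "(\<Sum>d\<in>sub_basis W. representation (sub_basis W) v d *\<^sub>R d) = v"
  using sum_representation_eq[OF sub_basis(2)[OF assms(1)] _ finite_sub_basis[OF assms(1)]]
    sub_basis(3)[OF assms(1)] assms(2) by simp

lemma sub_trace_cong:
  assumes "subspace W" and "\<And>x. x \<in> W \<Longrightarrow> f x = f' x"
  shows "sub_trace W f = sub_trace W f'"
  unfolding sub_trace_def Let_def using sub_basis(1)[OF assms(1)] assms(2)
  by (intro sum.cong) auto

lemma sub_trace_lincomb:
  assumes W: "subspace W" and f: "\<And>x. x \<in> W \<Longrightarrow> f x \<in> W" and f': "\<And>x. x \<in> W \<Longrightarrow> f' x \<in> W"
  shows "sub_trace W (\<lambda>x. a *\<^sub>R f x + b *\<^sub>R f' x) = a * sub_trace W f + b * sub_trace W f'"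
proof -
  let ?B = "sub_basis W"
  have "representation ?B (a *\<^sub>R f x + b *\<^sub>R f' x) x
          = a * representation ?B (f x) x + b * representation ?B (f' x) x" if "x \<in> ?B" for x
  proof -
    have "f x \<in> span ?B" "f' x \<in> span ?B"
      using sub_basis[OF W] f f' that by auto
    then show ?thesis
      using sub_basis(2)[OF W] by (simp add: representation_add representation_scale span_scale)
  qed
  then show ?thesis
    unfolding sub_trace_def Let_def by (simp add: sum.distrib sum_distrib_left)
qed

lemma sub_trace_id:
  assumes "subspace W"
  shows "sub_trace W (\<lambda>x. x) = dim W"
  unfolding sub_trace_def Let_def
  using sub_basis[OF assms] card_sub_basis[OF assms] by (simp add: representation_basis)

lemma complex_form_eq_trace_decomposition:
  assumes W: "subspace W" "dim W > 0"
    and J: "\<And>x. x \<in> W \<Longrightarrow> J x \<in> W" "\<And>x. J (J x) = - x"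
    and A: "\<And>x. x \<in> W \<Longrightarrow> A x = a *\<^sub>R x - c *\<^sub>R J x"
    and trJ: "sub_trace W J * a = 0" "sub_trace W J * c = 0"
    and x: "x \<in> W"
  shows "A x = (sub_trace W A / dim W) *\<^sub>R x - (sub_trace W (A \<circ> J) / dim W) *\<^sub>R J x"
proof -
  have "sub_trace W A = sub_trace W (\<lambda>y. a *\<^sub>R y + (- c) *\<^sub>R J y)"
    using A by (intro sub_trace_cong[OF W(1)]) simp
  also have "\<dots> = a * sub_trace W (\<lambda>y. y) + (- c) * sub_trace W J"
    by (rule sub_trace_lincomb[OF W(1)]) (use J in auto)
  finally have trA: "sub_trace W A = a * dim W"
    using sub_trace_id[OF W(1)] trJ by (simp add: mult.commute)
  have "sub_trace W (A \<circ> J) = sub_trace W (\<lambda>y. a *\<^sub>R J y + c *\<^sub>R y)"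
    using A J by (intro sub_trace_cong[OF W(1)]) simp
  also have "\<dots> = a * sub_trace W J + c * sub_trace W (\<lambda>y. y)"
    by (rule sub_trace_lincomb[OF W(1)]) (use J in auto)
  finally have trAJ: "sub_trace W (A \<circ> J) = c * dim W"
    using sub_trace_id[OF W(1)] trJ by (simp add: mult.commute)
  have "real (dim W) \<noteq> 0"
    using W(2) by (simp only: of_nat_eq_0_iff neq0_conv)
  then show ?thesis
    by (simp add: A[OF x] trA trAJ)
qed

lemma g_trace_cong:
  assumes "subspace W" and "\<And>x y. x \<in> W \<Longrightarrow> y \<in> W \<Longrightarrow> s x y = t x y"
  shows "g_trace g W s = g_trace g W t"
  unfolding g_trace_def Let_def using sub_basis(1)[OF assms(1)] assms(2)
  by (intro sum.cong) (auto simp: subset_iff)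

lemma g_trace_diff: "g_trace g W (\<lambda>x y. s x y - t x y) = g_trace g W s - g_trace g W t"
  by (simp add: g_trace_def Let_def scaleR_diff_right sum_subtractf)

lemma linear_inj_on_subspace_image_eq:
  fixes f :: "'a::euclidean_space \<Rightarrow> 'a"
  assumes f: "linear f" and S: "subspace S" and inj: "inj_on f S" and image: "f ` S \<subseteq> S"
  shows "f ` S = S"
proof -
  have "dim (f ` S) = dim S"
    by (rule dim_image_eq[OF f]) (simp add: span_eq_iff[THEN iffD2, OF S] inj)
  then show ?thesis
    using subspace_dim_equal[OF linear_subspace_image[OF f S] S image] by simp
qed

locale nondegenerate_subspace =
  fixes g :: "'a::euclidean_space \<Rightarrow> 'a \<Rightarrow> real" and W :: "'a set"
  assumes bilinear: "bilinear g"
    and symmetric: "\<And>x y. g x y = g y x"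
    and subspace: "subspace W"
    and nondegenerate: "\<And>x. x \<in> W \<Longrightarrow> (\<forall>y\<in>W. g x y = 0) \<Longrightarrow> x = 0"
begin

lemma linear_left: "linear (\<lambda>x. g x y)" and linear_right: "linear (g x)"
  using bilinear by (simp_all add: bilinear_def)

lemma pairing_expansion_left:
  assumes "v \<in> W"
  shows "g v y = (\<Sum>d\<in>sub_basis W. representation (sub_basis W) v d * g d y)"
proof -
  have "g v y = g (\<Sum>d\<in>sub_basis W. representation (sub_basis W) v d *\<^sub>R d) y"
    using sub_basis_expansion[OF subspace assms] by simp
  then show ?thesis
    by (simp add: linear_sum[OF linear_left] linear_cmul[OF linear_left])
qed

lemma pairing_expansion_right:
  assumes "v \<in> W"
  shows "g y v = (\<Sum>d\<in>sub_basis W. representation (sub_basis W) v d * g y d)"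
proof -
  have "g y v = g y (\<Sum>d\<in>sub_basis W. representation (sub_basis W) v d *\<^sub>R d)"
    using sub_basis_expansion[OF subspace assms] by simp
  then show ?thesis
    by (simp add: linear_sum[OF linear_right] linear_cmul[OF linear_right])
qed

lemma eq_if_pairings_eq:
  assumes "u \<in> W" "v \<in> W" "\<And>y. y \<in> W \<Longrightarrow> g u y = g v y"
  shows "u = v"
  using nondegenerate[of "u - v"] assms subspace_diff[OF subspace]
  by (simp add: linear_diff[OF linear_left])

lemma dual_basis_exists:
  assumes b: "b \<in> sub_basis W"
  shows "\<exists>w\<in>W. \<forall>d\<in>sub_basis W. g w d = (if b = d then 1 else 0)"
proof -
  let ?B = "sub_basis W"
  note B = sub_basis[OF subspace] finite_sub_basis[OF subspace]
  define \<phi> where "\<phi> w = (\<Sum>d\<in>?B. g w d *\<^sub>R d)" for w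
  have \<phi>_lin: "linear \<phi>"
    unfolding \<phi>_def
    by (intro linearI) (simp_all add: linear_add[OF linear_left] linear_cmul[OF linear_left]
        sum.distrib scaleR_add_left scaleR_sum_right)
  have coeffs_eq_0: "\<forall>d\<in>?B. c d = 0" if "(\<Sum>d\<in>?B. c d *\<^sub>R d) = 0" for c
    using B(2) that unfolding independent_explicit by blast
  have \<phi>_eq_0: "\<forall>d\<in>?B. g w d = 0" if "\<phi> w = 0" for w
    using coeffs_eq_0[of "g w"] that unfolding \<phi>_def by blast
  have inj: "inj_on \<phi> W"
  proof (rule linear_inj_on_iff_eq_0[OF \<phi>_lin subspace, THEN iffD2], intro ballI impI)
    fix x assume x: "x \<in> W" "\<phi> x = 0"
    have "g x v = 0" if "v \<in> W" for v
      using pairing_expansion_right[OF that, of x] \<phi>_eq_0[OF x(2)] by simp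
    then show "x = 0" using nondegenerate x(1) by blast
  qed
  have "\<phi> ` W \<subseteq> W"
    unfolding \<phi>_def using B(1) subspace by (auto intro!: subspace_sum subspace_scale)
  then have "\<phi> ` W = W"
    by (rule linear_inj_on_subspace_image_eq[OF \<phi>_lin subspace inj])
  then have "b \<in> \<phi> ` W"
    using b B(1) by auto
  then obtain w where w: "w \<in> W" "\<phi> w = b"
    by (rule imageE) simp
  have "(\<Sum>d\<in>?B. (if b = d then 1 else 0) *\<^sub>R d) = (\<Sum>d\<in>?B. if b = d then d else 0)"
    by (intro sum.cong) auto
  also have "\<dots> = b"
    using b B(4) by simp
  finally have "\<phi> w - (\<Sum>d\<in>?B. (if b = d then 1 else 0) *\<^sub>R d) = 0"
    using w by simp
  then have "(\<Sum>d\<in>?B. (g w d - (if b = d then 1 else 0)) *\<^sub>R d) = 0"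
    unfolding \<phi>_def by (simp add: scaleR_diff_left sum_subtractf)
  then have "\<forall>d\<in>?B. g w d - (if b = d then 1 else 0) = 0"
    by (rule coeffs_eq_0)
  then show ?thesis using w(1) by (intro bexI[of _ w]) auto
qed

lemma gram_inverse_exists:
  "\<exists>h. \<forall>b\<in>sub_basis W. \<forall>d\<in>sub_basis W.
     (\<Sum>c\<in>sub_basis W. h b c * g c d) = (if b = d then 1 else 0)"
proof -
  let ?B = "sub_basis W"
  obtain w where w: "\<And>b. b \<in> ?B \<Longrightarrow> w b \<in> W"
    and dual: "\<And>b d. b \<in> ?B \<Longrightarrow> d \<in> ?B \<Longrightarrow> g (w b) d = (if b = d then 1 else 0)"
    using dual_basis_exists by metis
  have "(\<Sum>c\<in>?B. representation ?B (w b) c * g c d) = (if b = d then 1 else 0)"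
    if "b \<in> ?B" "d \<in> ?B" for b d
    using pairing_expansion_left[OF w[OF that(1)], of d] dual[OF that] by simp
  then show ?thesis by (intro exI[of _ "\<lambda>b. representation ?B (w b)"]) auto
qed

text \<open>The inverse Gram matrix contracts the Gram-matrix expansion of K b back to the
  b-th coordinate of K b.\<close>
lemma g_trace_pairing:
  assumes K: "\<And>x. x \<in> W \<Longrightarrow> K x \<in> W"
  shows "g_trace g W (\<lambda>x y. g (K x) y *\<^sub>R u) = sub_trace W K *\<^sub>R u"
proof -
  let ?B = "sub_basis W"
  note B = sub_basis[OF subspace] finite_sub_basis[OF subspace]
  define ginv where "ginv = (SOME h. \<forall>b\<in>?B. \<forall>d\<in>?B. (\<Sum>c\<in>?B. h b c * g c d) = (if b = d then 1 else 0))"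
  have ginv: "b \<in> ?B \<Longrightarrow> d \<in> ?B \<Longrightarrow> (\<Sum>c\<in>?B. ginv b c * g c d) = (if b = d then 1 else 0)" for b d
    using someI_ex[OF gram_inverse_exists] unfolding ginv_def by blast
  have contract: "(\<Sum>c\<in>?B. ginv b c * g (K b) c) = representation ?B (K b) b" if b: "b \<in> ?B" for b
  proof -
    let ?r = "representation ?B (K b)"
    have "g (K b) c = (\<Sum>d\<in>?B. ?r d * g c d)" for c
      using pairing_expansion_right[of "K b" c] K b B(1) symmetric[of "K b" c] by auto
    then have "(\<Sum>c\<in>?B. ginv b c * g (K b) c) = (\<Sum>c\<in>?B. \<Sum>d\<in>?B. ?r d * (ginv b c * g c d))"
      by (simp add: sum_distrib_left mult.left_commute)
    also have "\<dots> = (\<Sum>d\<in>?B. ?r d * (\<Sum>c\<in>?B. ginv b c * g c d))"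
      by (subst sum.swap) (simp add: sum_distrib_left)
    also have "\<dots> = (\<Sum>d\<in>?B. if b = d then ?r d else 0)"
      using ginv[OF b] by (intro sum.cong) auto
    also have "\<dots> = ?r b"
      using b B(4) by simp
    finally show ?thesis .
  qed
  have "g_trace g W (\<lambda>x y. g (K x) y *\<^sub>R u) = (\<Sum>b\<in>?B. (\<Sum>c\<in>?B. ginv b c * g (K b) c) *\<^sub>R u)"
    unfolding g_trace_def Let_def ginv_def[symmetric] by (simp add: scaleR_sum_left)
  also have "\<dots> = sub_trace W K *\<^sub>R u"
    unfolding sub_trace_def Let_def by (simp add: contract scaleR_sum_left)
  finally show ?thesis .
qed

lemma shape_operator_eq:
  assumes J: "\<And>x. x \<in> W \<Longrightarrow> J x \<in> W"
    and A: "\<And>x. x \<in> W \<Longrightarrow> A x \<in> W"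
    and shape: "\<And>x y. x \<in> W \<Longrightarrow> y \<in> W \<Longrightarrow> g (A x) y = g (\<sigma> x y) \<eta>"
    and \<sigma>: "\<And>x y. x \<in> W \<Longrightarrow> y \<in> W \<Longrightarrow> \<sigma> x y = g x y *\<^sub>R h - g (J x) y *\<^sub>R J h"
    and x: "x \<in> W"
  shows "A x = g h \<eta> *\<^sub>R x - g (J h) \<eta> *\<^sub>R J x"
proof (rule eq_if_pairings_eq)
  show "A x \<in> W" using A x .
  show "g h \<eta> *\<^sub>R x - g (J h) \<eta> *\<^sub>R J x \<in> W"
    using J x subspace by (intro subspace_diff subspace_scale) auto
  show "g (A x) y = g (g h \<eta> *\<^sub>R x - g (J h) \<eta> *\<^sub>R J x) y" if "y \<in> W" for y
    using shape[OF x that] \<sigma>[OF x that]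
    by (simp add: linear_diff[OF linear_left] linear_cmul[OF linear_left] mult.commute)
qed

lemma trace_J_scale_eq_0:
  assumes J: "\<And>x. x \<in> W \<Longrightarrow> J x \<in> W"
    and \<sigma>: "\<And>x y. x \<in> W \<Longrightarrow> y \<in> W \<Longrightarrow> \<sigma> x y = g x y *\<^sub>R h - g (J x) y *\<^sub>R J h"
    and h: "g_trace g W \<sigma> = real (dim W) *\<^sub>R h"
  shows "sub_trace W J *\<^sub>R J h = 0"
proof -
  have "real (dim W) *\<^sub>R h = g_trace g W (\<lambda>x y. g x y *\<^sub>R h) - g_trace g W (\<lambda>x y. g (J x) y *\<^sub>R J h)"
    unfolding h[symmetric] g_trace_diff[symmetric] by (rule g_trace_cong[OF subspace \<sigma>])
  also have "\<dots> = real (dim W) *\<^sub>R h - sub_trace W J *\<^sub>R J h"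
    using g_trace_pairing[of "\<lambda>x. x" h] g_trace_pairing[of J "J h", OF J] sub_trace_id[OF subspace]
    by simp
  finally show ?thesis
    by simp
qed

end

theorem lemma2p4:
  fixes n :: nat
    and g :: "'a::euclidean_space \<Rightarrow> 'a \<Rightarrow> real"
    and J :: "'a \<Rightarrow> 'a"
    and W :: "'a set"
    and \<sigma> :: "'a \<Rightarrow> 'a \<Rightarrow> 'a"
  assumes n_pos: "n \<ge> 1"
    and dimM': "DIM('a) = 2 * n + 2"
    and g_bilin: "bilinear g"
    and g_sym: "\<And>x y. g x y = g y x"
    and g_nondeg: "\<And>x. (\<forall>y. g x y = 0) \<Longrightarrow> x = 0"
    and J_lin: "linear J"
    and J_sq: "\<And>x. J (J x) = - x"
    and Norden: "\<And>x y. g (J x) (J y) = - g x y"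
    and W_sub: "subspace W"
    and dimM: "dim W = 2 * n"
    and W_J: "\<And>x. x \<in> W \<Longrightarrow> J x \<in> W"
    and W_nondeg: "\<And>x. x \<in> W \<Longrightarrow> (\<forall>y\<in>W. g x y = 0) \<Longrightarrow> x = 0"
    and \<sigma>_normal: "\<And>x y. x \<in> W \<Longrightarrow> y \<in> W \<Longrightarrow> \<sigma> x y \<in> normal_space g W"
    and \<sigma>_sym: "\<And>x y. x \<in> W \<Longrightarrow> y \<in> W \<Longrightarrow> \<sigma> x y = \<sigma> y x"
    and \<sigma>_lin: "\<And>x. x \<in> W \<Longrightarrow> linear (\<sigma> x)"
    and hyp: "\<And>x y. x \<in> W \<Longrightarrow> y \<in> W \<Longrightarrow>
       \<sigma> x y = g x y *\<^sub>R ((1 / real (2 * n)) *\<^sub>R g_trace g W \<sigma>)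
               - g (J x) y *\<^sub>R J ((1 / real (2 * n)) *\<^sub>R g_trace g W \<sigma>)"
  shows "\<forall>\<eta> \<in> normal_space g W. \<forall>A.
           ((\<forall>x\<in>W. A x \<in> W) \<and> (\<forall>x\<in>W. \<forall>y\<in>W. g (A x) y = g (\<sigma> x y) \<eta>)) \<longrightarrow>
           (\<forall>x\<in>W. A x = (sub_trace W A / real (2 * n)) *\<^sub>R x
                        - (sub_trace W (A \<circ> J) / real (2 * n)) *\<^sub>R J x)"
proof (intro ballI allI impI)
  interpret nondegenerate_subspace g W
    using g_bilin g_sym W_sub W_nondeg by unfold_locales
  define h where "h = (1 / real (2 * n)) *\<^sub>R g_trace g W \<sigma>"
  have \<sigma>: "\<sigma> x y = g x y *\<^sub>R h - g (J x) y *\<^sub>R J h" if "x \<in> W" "y \<in> W" for x y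
    using hyp[OF that] unfolding h_def .
  have trJ_Jh: "sub_trace W J *\<^sub>R J h = 0"
    using trace_J_scale_eq_0[OF W_J \<sigma>] n_pos dimM by (simp add: h_def)
  have "sub_trace W J *\<^sub>R h = - J (sub_trace W J *\<^sub>R J h)"
    using J_sq[of h] linear_cmul[OF J_lin] by simp
  then have trJ_h: "sub_trace W J *\<^sub>R h = 0"
    using trJ_Jh linear_0[OF J_lin] by simp
  fix \<eta> A x
  assume "(\<forall>x\<in>W. A x \<in> W) \<and> (\<forall>x\<in>W. \<forall>y\<in>W. g (A x) y = g (\<sigma> x y) \<eta>)" and x: "x \<in> W"
  then have "A y = g h \<eta> *\<^sub>R y - g (J h) \<eta> *\<^sub>R J y" if "y \<in> W" for y
    using shape_operator_eq[OF W_J _ _ \<sigma> that] by blast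
  moreover have "sub_trace W J * g v \<eta> = 0" if "sub_trace W J *\<^sub>R v = 0" for v
    using linear_cmul[OF linear_left, of "sub_trace W J" v \<eta>] linear_0[OF linear_left] that by simp
  ultimately show "A x = (sub_trace W A / real (2 * n)) *\<^sub>R x - (sub_trace W (A \<circ> J) / real (2 * n)) *\<^sub>R J x"
    using complex_form_eq_trace_decomposition[OF W_sub _ W_J J_sq _ _ _ x] trJ_h trJ_Jh dimM n_pos
    by simp
qed

end
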